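(* In the setting of the context, let $\gamma^*\in(0,1)$ be the unique solution of $\sigma\gamma+mf\log(1-\gamma)=0$. If $\gamma\in(0,1)\setminus\{\gamma^*\}$, then there exists a number $\bar u_\gamma$ such that $\lim_{t\to+\infty}u_\gamma(x,t)=\bar u_\gamma$ for every $x\in[0,1)$.
   Context: Fix constants $\sigma>0$, $f>0$, $m>0$ with $\sigma>mf$. For $\gamma\in(0,1]$ let $u_\gamma$ be the unique (mild, in fact classical) solution of \[ \partial_tu_\gamma+\sigma x(1-x)\partial_xu_\gamma=\frac{mf}{\gamma}\big[u_\gamma(x+\gamma(1-x),t)-u_\gamma(x,t)\big]\ (0\le x\le1,\ t>0),\quad u_\gamma(x,0)=x. \] *)

theory Defs
  imports "HOL-Analysis.Analysis"
begin

definition classical_solution ::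
  "real \<Rightarrow> real \<Rightarrow> real \<Rightarrow> real \<Rightarrow> (real \<Rightarrow> real \<Rightarrow> real) \<Rightarrow> bool" where
  "classical_solution \<sigma> m f \<gamma> u \<longleftrightarrow>
     continuous_on ({0..1} \<times> {0..}) (\<lambda>(x, t). u x t) \<and>
     (\<forall>x\<in>{0..1}. u x 0 = x) \<and>
     (\<exists>ux ut :: real \<Rightarrow> real \<Rightarrow> real.
        continuous_on ({0..1} \<times> {0<..}) (\<lambda>(x, t). ux x t) \<and>
        continuous_on ({0..1} \<times> {0<..}) (\<lambda>(x, t). ut x t) \<and>
        (\<forall>x\<in>{0..1}. \<forall>t>0.
           ((\<lambda>y. u y t) has_real_derivative ux x t) (at x within {0..1}) \<and>
           ((\<lambda>s. u x s) has_real_derivative ut x t) (at t) \<and>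
           ut x t + \<sigma> * x * (1 - x) * ux x t
             = (m * f / \<gamma>) * (u (x + \<gamma> * (1 - x)) t - u x t)))"

end

theory Submission
  imports Defs "HOL-Real_Asymp.Real_Asymp"
begin

text \<open>With \<open>\<rho> = m f / \<gamma>\<close>, the sign of \<open>\<sigma> \<gamma> + m f log (1 - \<gamma>)\<close> is the sign of
  \<open>\<sigma> + \<rho> log (1 - \<gamma>)\<close>, the derivative at \<open>p = 0\<close> of \<open>p \<mapsto> \<sigma> p + \<rho> ((1 - \<gamma>) powr p - 1)\<close>.
  Everything else is the comparison principle for the nonlocal transport equation.

  If \<open>\<gamma> > \<gamma>*\<close> this derivative is negative, so for small \<open>p > 0\<close> the rate
  \<open>a = \<sigma> p + \<rho> ((1 - \<gamma>) powr p - 1)\<close> is negative and \<open>1 - exp (a t) (1 - x) powr p\<close> is a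
  subsolution; squeezed between it and the supersolution \<open>1\<close>, \<open>u\<close> tends to \<open>1\<close>.

  If \<open>\<gamma> < \<gamma>*\<close>, for small \<open>q > 0\<close> the rate \<open>\<kappa> = \<sigma> q - \<rho> ((1 - \<gamma>) powr (-q) - 1)\<close> is
  positive, and comparison in the doubled variables \<open>x \<le> y\<close> gives
  \<open>\<bar>u y t - u x t\<bar> \<le> exp (-\<kappa> t) \<Phi>\<^sub>q(x, y)\<close> with \<open>\<Phi>\<^sub>q(x, y) = \<integral>\<^sub>x\<^sup>y (1 - s) powr (-q - 1) ds\<close>.
  Then \<open>\<partial>\<^sub>t u(0, t) = \<rho> (u(\<gamma>, t) - u(0, t))\<close> decays exponentially, so \<open>u(0, t)\<close> converges,
  and every \<open>u(x, t)\<close> with \<open>x < 1\<close> follows it.\<close>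

lemma nonneg_if_pos_perturbation:
  fixes a c :: real
  assumes "\<And>d. d > 0 \<Longrightarrow> a + d * c > 0"
  shows "a \<ge> 0"
proof -
  have "((\<lambda>d. a + d * c) \<longlongrightarrow> a + 0 * c) (at_right 0)"
    by (intro tendsto_intros)
  moreover have "\<forall>\<^sub>F d in at_right 0. a + d * c \<ge> 0"
    using assms by (auto simp: eventually_at_right_field intro!: exI[of _ 1] less_imp_le)
  ultimately show ?thesis by (intro tendsto_lowerbound) auto
qed

lemma deriv_zero_at_interior_min:
  fixes g :: "real \<Rightarrow> real"
  assumes "(g has_real_derivative d) (at x within S)" "{a<..<b} \<subseteq> S" "a < x" "x < b"
    and "\<And>y. a < y \<Longrightarrow> y < b \<Longrightarrow> g x \<le> g y"
  shows "d = 0"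
proof -
  have "(g has_real_derivative d) (at x)"
    using has_field_derivative_subset[OF assms(1,2)] at_within_open[of x "{a<..<b}"] assms(3,4)
    by auto
  moreover have "\<forall>y. \<bar>x - y\<bar> < min (x - a) (b - x) \<longrightarrow> g x \<le> g y" using assms(5) by auto
  ultimately show ?thesis using DERIV_local_min[of g d x "min (x - a) (b - x)"] assms by auto
qed

lemma deriv_nonpos_at_first_zero:
  fixes h :: "real \<Rightarrow> real"
  assumes "(h has_real_derivative d) (at t)" "t > 0" "h t = 0" "\<forall>s\<in>{0..<t}. h s > 0"
  shows "d \<le> 0"
proof (rule ccontr)
  assume "\<not> d \<le> 0"
  then obtain e where e: "e > 0" "\<forall>k>0. k < e \<longrightarrow> h (t - k) < h t"
    using DERIV_pos_inc_left[OF assms(1)] by auto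
  define k where "k = min (e/2) (t/2)"
  have "h (t - k) < 0" and "h (t - k) > 0"
    using e assms(2-4) by (auto simp: k_def)
  then show False by simp
qed

lemma compact_sublevel:
  fixes z :: "'a::metric_space \<Rightarrow> 'b::metric_space \<Rightarrow> real"
  assumes "compact K" and "continuous_on K (\<lambda>(p, t). z p t)"
  shows "compact {(p, t). (p, t) \<in> K \<and> z p t \<le> 0}"
proof -
  have "closed (K \<inter> (\<lambda>(p, t). z p t) -` {..0})"
    using continuous_closed_preimage[OF assms(2) compact_imp_closed[OF assms(1)]] by auto
  then have "compact (K \<inter> (K \<inter> (\<lambda>(p, t). z p t) -` {..0}))"
    using compact_Int_closed[OF assms(1)] by blast
  moreover have "K \<inter> (K \<inter> (\<lambda>(p, t). z p t) -` {..0}) = {(p, t). (p, t) \<in> K \<and> z p t \<le> 0}"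
    by auto
  ultimately show ?thesis by simp
qed

text \<open>Compactness of the sublevel sets provides a first time at which \<open>z\<close> reaches \<open>0\<close>.\<close>

lemma positive_unless_first_contact:
  fixes z :: "'a::topological_space \<Rightarrow> real \<Rightarrow> real"
  assumes initial: "\<And>p. p \<in> D \<Longrightarrow> z p 0 > 0"
    and compact: "\<And>T. T \<ge> 0 \<Longrightarrow> compact {(p, t). p \<in> D \<and> t \<in> {0..T} \<and> z p t \<le> 0}"
    and left_cont: "\<And>p t. p \<in> D \<Longrightarrow> t > 0 \<Longrightarrow> continuous (at_left t) (z p)"
    and no_contact: "\<And>p t. p \<in> D \<Longrightarrow> t > 0 \<Longrightarrow> \<forall>q\<in>D. z q t \<ge> 0 \<Longrightarrow> z p t = 0
      \<Longrightarrow> \<forall>s\<in>{0..<t}. z p s > 0 \<Longrightarrow> False"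
    and "p \<in> D" "t \<ge> 0"
  shows "z p t > 0"
proof (rule ccontr)
  assume "\<not> z p t > 0"
  define B where "B = {(p, s). p \<in> D \<and> s \<in> {0..t} \<and> z p s \<le> 0}"
  have "(p, t) \<in> B" using \<open>\<not> z p t > 0\<close> assms(5,6) unfolding B_def by auto
  moreover have "compact (snd ` B)"
    unfolding B_def by (intro compact_continuous_image continuous_intros compact \<open>t \<ge> 0\<close>)
  ultimately obtain t0 where "t0 \<in> snd ` B" and t0_min: "\<forall>s\<in>snd ` B. t0 \<le> s"
    using compact_attains_inf[of "snd ` B"] by blast
  then obtain p0 where p0: "p0 \<in> D" "t0 \<in> {0..t}" "z p0 t0 \<le> 0" unfolding B_def by auto
  have "t0 > 0" using p0 initial[of p0] by (cases "t0 = 0") auto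
  have before: "z q s > 0" if "q \<in> D" "s \<in> {0..<t0}" for q s
  proof (rule ccontr)
    assume "\<not> z q s > 0"
    then have "(q, s) \<in> B" using that p0 unfolding B_def by auto
    then show False using t0_min that by force
  qed
  have nonneg: "z q t0 \<ge> 0" if "q \<in> D" for q
  proof (rule tendsto_lowerbound)
    show "(z q \<longlongrightarrow> z q t0) (at_left t0)"
      using left_cont[OF that \<open>t0 > 0\<close>] by (simp add: continuous_within)
    show "\<forall>\<^sub>F s in at_left t0. z q s \<ge> 0"
      unfolding eventually_at_left_field using \<open>t0 > 0\<close> before[OF that]
      by (intro exI[of _ 0]) (auto intro: less_imp_le)
  qed auto
  then have "z p0 t0 = 0" using p0 by force
  then show False using no_contact[OF p0(1) \<open>t0 > 0\<close>] nonneg before[OF p0(1)] by blast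
qed

lemma first_contact_operator_nonpos:
  fixes z :: "real \<Rightarrow> real \<Rightarrow> real"
  assumes "p \<in> {0..1}" "t > 0" "\<forall>q\<in>{0..1}. z q t \<ge> 0" "z p t = 0" "\<forall>s\<in>{0..<t}. z p s > 0"
    and "((\<lambda>s. z p s) has_real_derivative zt) (at t)"
    and "p \<in> {0<..<1} \<Longrightarrow> ((\<lambda>y. z y t) has_real_derivative zx) (at p within {0..1})"
    and "\<rho> \<ge> 0" "j \<in> {0..1}"
  shows "zt + \<sigma> * p * (1 - p) * zx - \<rho> * (z j t - z p t) \<le> 0"
proof -
  have "zt \<le> 0" using deriv_nonpos_at_first_zero assms(2,4-6) by blast
  moreover have "\<sigma> * p * (1 - p) * zx = 0"
  proof (cases "p \<in> {0<..<1}")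
    case True
    have "zx = 0"
      by (rule deriv_zero_at_interior_min[OF assms(7)[OF True], of 0 1]) (use True assms(3,4) in auto)
    then show ?thesis by simp
  qed (use assms(1) in auto)
  moreover have "\<rho> * (z j t - z p t) \<ge> 0" using assms(3,4,8,9) by auto
  ultimately show ?thesis by linarith
qed

lemma linear_plus_log_sign:
  fixes s c g g0 :: real
  assumes "c > 0" "0 < g0" "g0 < 1" "s * g0 + c * ln (1 - g0) = 0" "0 < g" "g < 1"
  shows "g < g0 \<Longrightarrow> s * g + c * ln (1 - g) > 0"
    and "g0 < g \<Longrightarrow> s * g + c * ln (1 - g) < 0"
proof -
  define G where "G x = s * x + c * ln (1 - x)" for x :: real
  define G' where "G' x = s - c / (1 - x)" for x :: real
  have deriv: "(G has_real_derivative G' x) (at x)" if "x < 1" for x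
    unfolding G_def G'_def using that by (auto intro!: derivative_eq_intros simp: field_simps)
  have G'_decreasing: "G' y < G' x" if "x < y" "y < 1" for x y
    using that assms(1) by (auto simp: G'_def intro!: divide_strict_left_mono)
  have G_roots: "G 0 = 0" "G g0 = 0" using assms(4) by (auto simp: G_def)
  have mvt: "\<exists>x. a < x \<and> x < b \<and> G b - G a = (b - a) * G' x" if "a < b" "b < 1" for a b
    using deriv that by (intro MVT2[OF that(1)]) auto
  show "s * g + c * ln (1 - g) > 0" if "g < g0"
  proof -
    obtain x1 where x1: "0 < x1" "x1 < g" "G g - G 0 = (g - 0) * G' x1"
      using mvt[of 0 g] assms(5,6) by blast
    obtain x2 where x2: "g < x2" "x2 < g0" "G g0 - G g = (g0 - g) * G' x2"
      using mvt[of g g0] assms(3) \<open>g < g0\<close> by blast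
    have "G' x1 = G g / g" using x1 G_roots assms(5) by (simp add: field_simps)
    moreover have "G' x2 = - G g / (g0 - g)" using x2 G_roots \<open>g < g0\<close> by (simp add: field_simps)
    ultimately have "G g / g + G g / (g0 - g) > 0"
      using G'_decreasing[of x1 x2] x1 x2 assms(3) by simp
    then have "G g * (1 / g + 1 / (g0 - g)) > 0" by (simp add: distrib_left)
    moreover have "1 / g + 1 / (g0 - g) > 0" using assms(5) that by (intro add_pos_pos) auto
    ultimately show ?thesis unfolding G_def using zero_less_mult_pos2 by blast
  qed
  show "s * g + c * ln (1 - g) < 0" if "g0 < g"
  proof -
    obtain x1 where x1: "0 < x1" "x1 < g0" "G g0 - G 0 = (g0 - 0) * G' x1"
      using mvt[of 0 g0] assms(2,3) by blast
    obtain x2 where x2: "g0 < x2" "x2 < g" "G g - G g0 = (g - g0) * G' x2"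
      using mvt[of g0 g] assms(6) \<open>g0 < g\<close> by blast
    have "G' x2 < 0" using G'_decreasing[of x1 x2] x1 x2 G_roots assms(2,6) by auto
    then have "G g < 0" using x2 G_roots that by (simp add: mult_pos_neg)
    then show ?thesis unfolding G_def .
  qed
qed

lemma small_exponent_with_negative_rate:
  fixes s r b k :: real
  assumes "0 < b" and "k * (s + r * ln b) < 0"
  shows "\<exists>p. 0 < p \<and> p < 1 \<and> k * s * p + r * (b powr (k * p) - 1) < 0"
proof -
  define F where "F p = k * s * p + r * (b powr (k * p) - 1)" for p
  have "(F has_real_derivative k * (s + r * ln b)) (at 0)"
    unfolding F_def using assms(1)
    by (auto intro!: derivative_eq_intros simp: algebra_simps)
  then obtain d where d: "d > 0" "\<And>h. h > 0 \<Longrightarrow> h < d \<Longrightarrow> F (0 + h) < F 0"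
    using DERIV_neg_dec_right[OF _ assms(2)] by blast
  have "F (min (d/2) (1/2)) < F 0" using d(1) d(2)[of "min (d/2) (1/2)"] by simp
  moreover have "F 0 = 0" unfolding F_def using assms(1) by simp
  ultimately show ?thesis unfolding F_def using d(1) by (intro exI[of _ "min (d/2) (1/2)"]) auto
qed

lemma antimono_tendsto_Inf:
  fixes V :: "real \<Rightarrow> real"
  assumes "\<And>a b. 0 \<le> a \<Longrightarrow> a \<le> b \<Longrightarrow> V b \<le> V a" and bdd: "bdd_below (V ` {0..})"
  shows "(V \<longlongrightarrow> Inf (V ` {0..})) at_top"
proof (rule order_tendstoI)
  fix a assume a: "a < Inf (V ` {0..})"
  have Inf_le: "Inf (V ` {0..}) \<le> V t" if "t \<ge> 0" for t using bdd that by (intro cInf_lower) auto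
  show "\<forall>\<^sub>F t in at_top. a < V t"
    using eventually_ge_at_top[of 0] by eventually_elim (meson a Inf_le less_le_trans)
next
  fix a assume "Inf (V ` {0..}) < a"
  then obtain t1 where t1: "t1 \<ge> 0" "V t1 < a" using cInf_less_iff[of "V ` {0..}" a] bdd by auto
  show "\<forall>\<^sub>F t in at_top. V t < a"
    using eventually_ge_at_top[of t1] by eventually_elim (meson t1 assms(1) le_less_trans)
qed

lemma antimono_if_deriv_nonpos:
  fixes f f' :: "real \<Rightarrow> real"
  assumes "continuous_on {0..} f" "\<And>t. t > 0 \<Longrightarrow> (f has_real_derivative f' t) (at t)"
    and "\<And>t. t > 0 \<Longrightarrow> f' t \<le> 0" and "0 \<le> a" "a \<le> b"
  shows "f b \<le> f a"
proof (rule DERIV_nonpos_imp_decreasing_open[OF assms(5)])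
  show "continuous_on {a..b} f" using assms(4) by (intro continuous_on_subset[OF assms(1)]) auto
  show "\<exists>y. (f has_real_derivative y) (at t) \<and> y \<le> 0" if "a < t" "t < b" for t
    using assms(2,3)[of t] assms(4) that by auto
qed

lemma convergent_if_deriv_exp_bounded:
  fixes h h' :: "real \<Rightarrow> real"
  assumes cont: "continuous_on {0..} h"
    and deriv: "\<And>t. t > 0 \<Longrightarrow> (h has_real_derivative h' t) (at t)"
    and bound: "\<And>t. t > 0 \<Longrightarrow> \<bar>h' t\<bar> \<le> C * exp (-\<kappa> * t)" and "\<kappa> > 0"
  shows "\<exists>L. (h \<longlongrightarrow> L) at_top"
proof -
  have "0 \<le> C * exp (-\<kappa> * 1)" using bound[of 1] by (metis abs_ge_zero order_trans zero_less_one)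
  then have "C \<ge> 0" by (simp add: zero_le_mult_iff)
  define E where "E t = (C / \<kappa>) * exp (-\<kappa> * t)" for t
  have E_deriv: "(E has_real_derivative - C * exp (-\<kappa> * t)) (at t)" for t
  proof -
    have "(E has_real_derivative (C / \<kappa>) * (exp (-\<kappa> * t) * (-\<kappa> * 1))) (at t)"
      unfolding E_def by (auto intro!: derivative_eq_intros)
    then show ?thesis using \<open>\<kappa> > 0\<close> by simp
  qed
  have E_nonneg: "E t \<ge> 0" for t using \<open>C \<ge> 0\<close> \<open>\<kappa> > 0\<close> by (simp add: E_def)
  have E_cont: "continuous_on {0..} E" unfolding E_def by (intro continuous_intros)
  have V_antimono: "h b + E b \<le> h a + E a" if "0 \<le> a" "a \<le> b" for a b
  proof (rule antimono_if_deriv_nonpos[OF _ _ _ that])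
    show "continuous_on {0..} (\<lambda>t. h t + E t)" by (intro continuous_intros cont E_cont)
    show "((\<lambda>t. h t + E t) has_real_derivative h' t - C * exp (-\<kappa> * t)) (at t)" if "t > 0" for t
      using E_deriv deriv[OF that] by (auto intro!: derivative_eq_intros)
    show "h' t - C * exp (-\<kappa> * t) \<le> 0" if "t > 0" for t
      using bound[OF that] by (simp add: abs_le_iff)
  qed
  have W_antimono: "E b - h b \<le> E a - h a" if "0 \<le> a" "a \<le> b" for a b
  proof (rule antimono_if_deriv_nonpos[OF _ _ _ that])
    show "continuous_on {0..} (\<lambda>t. E t - h t)" by (intro continuous_intros cont E_cont)
    show "((\<lambda>t. E t - h t) has_real_derivative - C * exp (-\<kappa> * t) - h' t) (at t)" if "t > 0" for t
      using E_deriv deriv[OF that] by (auto intro!: derivative_eq_intros)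
    show "- C * exp (-\<kappa> * t) - h' t \<le> 0" if "t > 0" for t
      using bound[OF that] by (simp add: abs_le_iff)
  qed
  have bdd: "bdd_below ((\<lambda>t. h t + E t) ` {0..})"
  proof (rule bdd_belowI[of _ "h 0 - E 0"])
    fix v assume "v \<in> (\<lambda>t. h t + E t) ` {0..}"
    then obtain t where "t \<ge> 0" "v = h t + E t" by auto
    then show "h 0 - E 0 \<le> v" using W_antimono[of 0 t] E_nonneg[of t] by simp
  qed
  have "((\<lambda>t. h t + E t) \<longlongrightarrow> Inf ((\<lambda>t. h t + E t) ` {0..})) at_top"
    by (rule antimono_tendsto_Inf[OF V_antimono bdd])
  moreover have "(E \<longlongrightarrow> 0) at_top" unfolding E_def using \<open>\<kappa> > 0\<close> by real_asymp
  ultimately have "((\<lambda>t. (h t + E t) - E t) \<longlongrightarrow> Inf ((\<lambda>t. h t + E t) ` {0..}) - 0) at_top"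
    by (intro tendsto_diff)
  then show ?thesis by auto
qed

section \<open>The jump map and the two-point potential\<close>

definition jump :: "real \<Rightarrow> real \<Rightarrow> real" where
  "jump \<gamma> x = x + \<gamma> * (1 - x)"

lemma one_minus_jump: "1 - jump \<gamma> x = (1 - \<gamma>) * (1 - x)"
  by (simp add: jump_def algebra_simps)

lemma jump_in_unit:
  assumes "0 \<le> \<gamma>" "\<gamma> \<le> 1" "x \<in> {0..1}"
  shows "jump \<gamma> x \<in> {0..1}"
proof -
  have "0 \<le> (1 - \<gamma>) * (1 - x)" using assms by simp
  then have "jump \<gamma> x \<le> 1" using one_minus_jump[of \<gamma> x] by linarith
  moreover have "0 \<le> jump \<gamma> x" using assms by (simp add: jump_def)
  ultimately show ?thesis by simp
qed

definition ordered_pairs :: "(real \<times> real) set" where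
  "ordered_pairs = {(x, y). 0 \<le> x \<and> x \<le> y \<and> y < 1}"

lemma jump_ordered_pairs:
  assumes "0 \<le> \<gamma>" "\<gamma> < 1" "(x, y) \<in> ordered_pairs"
  shows "(jump \<gamma> x, jump \<gamma> y) \<in> ordered_pairs"
proof -
  have "jump \<gamma> y - jump \<gamma> x = (1 - \<gamma>) * (y - x)" by (simp add: jump_def algebra_simps)
  moreover have "(1 - \<gamma>) * (y - x) \<ge> 0" "(1 - \<gamma>) * (1 - y) > 0"
    using assms by (auto simp: ordered_pairs_def)
  moreover have "0 \<le> jump \<gamma> x" using assms by (auto simp: jump_def ordered_pairs_def)
  ultimately show ?thesis using one_minus_jump[of \<gamma> y] by (auto simp: ordered_pairs_def)
qed

text \<open>\<open>Phi q x y\<close> is the integral of \<open>(1 - s) powr (-q - 1)\<close> over \<open>[x, y]\<close>.\<close>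

definition Phi :: "real \<Rightarrow> real \<Rightarrow> real \<Rightarrow> real" where
  "Phi q x y = ((1 - y) powr (-q) - (1 - x) powr (-q)) / q"

lemma Phi_ge_diff:
  assumes "0 \<le> x" "x \<le> y" "y < 1" "0 < q"
  shows "y - x \<le> Phi q x y"
proof (cases "x = y")
  case False
  define h where "h s = (1 - s) powr (-q) / q - s" for s :: real
  define h' where "h' s = (1 - s) powr (-q - 1) - 1" for s :: real
  have deriv: "(h has_real_derivative h' s) (at s)" if "s < 1" for s
  proof -
    have "(h has_real_derivative ((-q) * (1 - s) powr (-q - 1) * (-1)) / q - 1) (at s)"
      unfolding h_def using that by (auto intro!: derivative_eq_intros)
    then show ?thesis unfolding h'_def using assms(4) by simp
  qed
  obtain z where z: "x < z" "z < y" "h y - h x = (y - x) * h' z"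
    using MVT2[of x y h h'] deriv False assms by force
  have "(1 - z) powr 0 \<le> (1 - z) powr (-q - 1)" using z assms by (intro powr_mono') auto
  then have "h' z \<ge> 0" using z assms(3) by (simp add: h'_def)
  then have "h y - h x \<ge> 0" using z by simp
  then show ?thesis unfolding h_def Phi_def by (simp add: diff_divide_distrib)
qed (simp add: Phi_def)

lemma Phi_jump:
  assumes "x < 1" "y < 1" "\<gamma> < 1"
  shows "Phi q (jump \<gamma> x) (jump \<gamma> y) = (1 - \<gamma>) powr (-q) * Phi q x y"
proof -
  have "(1 - jump \<gamma> s) powr (-q) = (1 - \<gamma>) powr (-q) * (1 - s) powr (-q)" if "s < 1" for s
    using assms(3) that by (simp add: one_minus_jump powr_mult)
  then show ?thesis using assms(1,2) by (simp add: Phi_def right_diff_distrib)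
qed

lemma Phi_deriv_left:
  assumes "x < 1" "q \<noteq> 0"
  shows "((\<lambda>x. Phi q x y) has_real_derivative - ((1 - x) powr (-q - 1))) (at x within S)"
proof -
  have "((\<lambda>x. Phi q x y) has_real_derivative (0 - (-q) * (1 - x) powr (-q - 1) * (0 - 1)) / q)
      (at x within S)"
    unfolding Phi_def using assms by (intro derivative_eq_intros) auto
  then show ?thesis using assms(2) by simp
qed

lemma Phi_deriv_right:
  assumes "y < 1" "q \<noteq> 0"
  shows "((\<lambda>y. Phi q x y) has_real_derivative (1 - y) powr (-q - 1)) (at y within S)"
proof -
  have "((\<lambda>y. Phi q x y) has_real_derivative ((-q) * (1 - y) powr (-q - 1) * (0 - 1) - 0) / q)
      (at y within S)"
    unfolding Phi_def using assms by (intro derivative_eq_intros) auto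
  then show ?thesis using assms(2) by simp
qed

text \<open>The drift of the doubled equation applied to \<open>Phi q\<close>; the sign needs \<open>q \<le> 1\<close>.\<close>

lemma Phi_drift:
  assumes "0 \<le> x" "x \<le> y" "y < 1" "0 < q" "q \<le> 1" "\<sigma> \<ge> 0"
  shows "\<sigma> * q * Phi q x y
    \<le> \<sigma> * x * (1 - x) * - ((1 - x) powr (-q - 1)) + \<sigma> * y * (1 - y) * (1 - y) powr (-q - 1)"
proof -
  have "q * Phi q x y = (1 - y) powr (-q) - (1 - x) powr (-q)"
    using assms(4) by (simp add: Phi_def)
  then have qPhi: "\<sigma> * q * Phi q x y = \<sigma> * ((1 - y) powr (-q) - (1 - x) powr (-q))"
    by (simp add: mult.assoc)
  have split: "(1 - s) * (1 - s) powr (-q - 1) = (1 - s) powr (-q)"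
    "(1 - s) * (1 - s) powr (-q) = (1 - s) powr (1 - q)" if "s < 1" for s
    using that powr_mult_base[of "1 - s" "-q - 1"] powr_mult_base[of "1 - s" "-q"] by simp_all
  have "\<sigma> * x * (1 - x) * - ((1 - x) powr (-q - 1)) + \<sigma> * y * (1 - y) * (1 - y) powr (-q - 1)
      - \<sigma> * q * Phi q x y
    = \<sigma> * ((1 - x) * (1 - x) powr (-q)) - \<sigma> * ((1 - y) * (1 - y) powr (-q))
      - \<sigma> * x * ((1 - x) * (1 - x) powr (-q - 1) - (1 - x) powr (-q))
      + \<sigma> * y * ((1 - y) * (1 - y) powr (-q - 1) - (1 - y) powr (-q))"
    unfolding qPhi by (simp add: algebra_simps)
  also have "\<dots> = \<sigma> * ((1 - x) powr (1 - q) - (1 - y) powr (1 - q))"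
    using split[of x] split[of y] assms(2,3) by (simp add: right_diff_distrib)
  finally have "\<sigma> * x * (1 - x) * - ((1 - x) powr (-q - 1)) + \<sigma> * y * (1 - y) * (1 - y) powr (-q - 1)
      - \<sigma> * q * Phi q x y = \<sigma> * ((1 - x) powr (1 - q) - (1 - y) powr (1 - q))" .
  moreover have "(1 - y) powr (1 - q) \<le> (1 - x) powr (1 - q)"
    using assms by (intro powr_mono2) auto
  ultimately show ?thesis using assms(6) by (smt (verit) mult_nonneg_nonneg)
qed

lemma Phi_bounded_imp_away_from_1:
  assumes "0 \<le> x" "x \<le> y" "y < 1" "0 < q" "0 < \<eta>" "\<eta> \<le> y - x" "Phi q x y \<le> B"
  shows "y \<le> 1 - (q * B + \<eta> powr (-q)) powr (-1 / q)"
proof (rule ccontr)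
  define K where "K = q * B + \<eta> powr (-q)"
  have "(1 - x) powr (-q) \<le> \<eta> powr (-q)" using assms by (intro powr_mono2') auto
  moreover have "(1 - y) powr (-q) = q * Phi q x y + (1 - x) powr (-q)"
    using assms(4) by (simp add: Phi_def)
  ultimately have bound: "(1 - y) powr (-q) \<le> K"
    unfolding K_def using assms(4,7) by (smt (verit) mult_left_mono)
  then have "K > 0" using assms(3) by (smt (verit) powr_gt_zero)
  assume "\<not> y \<le> 1 - K powr (-1 / q)"
  then have "(K powr (-1 / q)) powr (-q) < (1 - y) powr (-q)"
    using assms(3,4) \<open>K > 0\<close> by (intro powr_less_mono2_neg) auto
  then show False using bound \<open>K > 0\<close> assms(4) by (simp add: powr_powr)
qed

lemma first_contact_operator_nonpos_pairs:
  fixes z :: "real \<times> real \<Rightarrow> real \<Rightarrow> real"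
  assumes "(x, y) \<in> ordered_pairs" "x < y" "t > 0" "\<forall>p\<in>ordered_pairs. z p t \<ge> 0" "z (x, y) t = 0"
    and "\<forall>s\<in>{0..<t}. z (x, y) s > 0"
    and "((\<lambda>s. z (x, y) s) has_real_derivative zt) (at t)"
    and "0 < x \<Longrightarrow> ((\<lambda>x'. z (x', y) t) has_real_derivative zx) (at x within {0..1})"
    and "((\<lambda>y'. z (x, y') t) has_real_derivative zy) (at y within {0..1})"
    and "\<rho> \<ge> 0" "j \<in> ordered_pairs"
  shows "zt + \<sigma> * x * (1 - x) * zx + \<sigma> * y * (1 - y) * zy - \<rho> * (z j t - z (x, y) t) \<le> 0"
proof -
  have "zt \<le> 0" using deriv_nonpos_at_first_zero assms(3,5-7) by blast
  moreover have "\<sigma> * x * (1 - x) * zx = 0"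
  proof (cases "0 < x")
    case True
    have "zx = 0"
      by (rule deriv_zero_at_interior_min[OF assms(8)[OF True], of 0 y])
        (use True assms(1,2,4,5) in \<open>auto simp: ordered_pairs_def\<close>)
    then show ?thesis by simp
  qed (use assms(1) in \<open>auto simp: ordered_pairs_def\<close>)
  moreover have "zy = 0"
    by (rule deriv_zero_at_interior_min[OF assms(9), of x 1])
      (use assms(1,2,4,5) in \<open>auto simp: ordered_pairs_def\<close>)
  then have "\<sigma> * y * (1 - y) * zy = 0" by simp
  moreover have "\<rho> * (z j t - z (x, y) t) \<ge> 0" using assms(4,5,10,11) by auto
  ultimately show ?thesis by linarith
qed

locale jump_pde_solution =
  fixes \<sigma> \<rho> \<gamma> :: real and u ux ut :: "real \<Rightarrow> real \<Rightarrow> real"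
  assumes continuous: "continuous_on ({0..1} \<times> {0..}) (\<lambda>(x, t). u x t)"
    and initial: "\<And>x. x \<in> {0..1} \<Longrightarrow> u x 0 = x"
    and deriv_x: "\<And>x t. x \<in> {0..1} \<Longrightarrow> t > 0 \<Longrightarrow>
      ((\<lambda>y. u y t) has_real_derivative ux x t) (at x within {0..1})"
    and deriv_t: "\<And>x t. x \<in> {0..1} \<Longrightarrow> t > 0 \<Longrightarrow> ((\<lambda>s. u x s) has_real_derivative ut x t) (at t)"
    and pde: "\<And>x t. x \<in> {0..1} \<Longrightarrow> t > 0 \<Longrightarrow>
      ut x t + \<sigma> * x * (1 - x) * ux x t = \<rho> * (u (jump \<gamma> x) t - u x t)"
    and speed_nonneg: "\<sigma> \<ge> 0" and rate_nonneg: "\<rho> \<ge> 0" and jump_size: "0 < \<gamma>" "\<gamma> < 1"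
begin

lemma continuous_on_strip: "continuous_on ({0..1} \<times> {0..T}) (\<lambda>(x, t). u x t)"
  by (rule continuous_on_subset[OF continuous]) auto

lemma jump_in: "x \<in> {0..1} \<Longrightarrow> jump \<gamma> x \<in> {0..1}"
  using jump_in_unit jump_size by simp

lemma comparison:
  fixes w wx wt :: "real \<Rightarrow> real \<Rightarrow> real" and e :: real
  assumes e: "e = 1 \<or> e = -1"
    and w_cont: "continuous_on ({0..1} \<times> {0..}) (\<lambda>(x, t). w x t)"
    and w_initial: "\<And>x. x \<in> {0..1} \<Longrightarrow> e * (x - w x 0) \<ge> 0"
    and w_deriv_x: "\<And>x t. x \<in> {0<..<1} \<Longrightarrow> t > 0 \<Longrightarrow>
      ((\<lambda>y. w y t) has_real_derivative wx x t) (at x within {0..1})"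
    and w_deriv_t: "\<And>x t. x \<in> {0..1} \<Longrightarrow> t > 0 \<Longrightarrow> ((\<lambda>s. w x s) has_real_derivative wt x t) (at t)"
    and w_super: "\<And>x t. x \<in> {0..1} \<Longrightarrow> t > 0 \<Longrightarrow>
      e * (wt x t + \<sigma> * x * (1 - x) * wx x t - \<rho> * (w (jump \<gamma> x) t - w x t)) \<le> 0"
    and "x \<in> {0..1}" "t \<ge> 0"
  shows "e * (u x t - w x t) \<ge> 0"
proof (rule nonneg_if_pos_perturbation)
  fix d :: real assume "d > 0"
  define z where "z x t = e * (u x t - w x t) + d * exp t" for x t
  have z_deriv_t: "((\<lambda>s. z p s) has_real_derivative e * (ut p s - wt p s) + d * exp s) (at s)"
    if "p \<in> {0..1}" "s > 0" for p s
    unfolding z_def using that by (auto intro!: derivative_eq_intros deriv_t w_deriv_t)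
  have "z x t > 0"
  proof (rule positive_unless_first_contact[of "{0..1}" z])
    show "z p 0 > 0" if "p \<in> {0..1}" for p
      using w_initial[OF that] initial[OF that] \<open>d > 0\<close> by (simp add: z_def)
  next
    fix T :: real
    have "continuous_on ({0..1} \<times> {0..})
        (\<lambda>z. e * ((\<lambda>(x, t). u x t) z - (\<lambda>(x, t). w x t) z) + d * exp (snd z))"
      by (intro continuous_intros continuous w_cont)
    then have "continuous_on ({0..1} \<times> {0..}) (\<lambda>(p, t). z p t)"
      by (simp add: z_def case_prod_beta)
    then have "continuous_on ({0..1} \<times> {0..T}) (\<lambda>(p, t). z p t)"
      by (rule continuous_on_subset) auto
    then show "compact {(p, t). p \<in> {0..1} \<and> t \<in> {0..T} \<and> z p t \<le> 0}"
      using compact_sublevel[of "{0..1} \<times> {0..T}" z] by (auto intro: compact_Times)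
  next
    show "continuous (at_left s) (z p)" if "p \<in> {0..1}" "s > 0" for p s
      using DERIV_isCont[OF z_deriv_t[OF that]] continuous_at_imp_continuous_at_within by blast
  next
    fix p s :: real
    assume p: "p \<in> {0..1}" and "s > 0" and contact: "\<forall>q\<in>{0..1}. z q s \<ge> 0" "z p s = 0"
      "\<forall>r\<in>{0..<s}. z p r > 0"
    have z_deriv_x: "((\<lambda>y. z y s) has_real_derivative e * (ux p s - wx p s)) (at p within {0..1})"
      if "p \<in> {0<..<1}"
      unfolding z_def using that \<open>s > 0\<close>
      by (auto intro!: derivative_eq_intros deriv_x w_deriv_x)
    have "e * (ut p s - wt p s) + d * exp s + \<sigma> * p * (1 - p) * (e * (ux p s - wx p s))
        - \<rho> * (z (jump \<gamma> p) s - z p s) \<le> 0"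
      using first_contact_operator_nonpos[OF p \<open>s > 0\<close> contact z_deriv_t[OF p \<open>s > 0\<close>] z_deriv_x
          rate_nonneg jump_in[OF p]] .
    moreover have "e * (ut p s - wt p s) + d * exp s + \<sigma> * p * (1 - p) * (e * (ux p s - wx p s))
        - \<rho> * (z (jump \<gamma> p) s - z p s)
      = e * (ut p s + \<sigma> * p * (1 - p) * ux p s - \<rho> * (u (jump \<gamma> p) s - u p s))
        - e * (wt p s + \<sigma> * p * (1 - p) * wx p s - \<rho> * (w (jump \<gamma> p) s - w p s)) + d * exp s"
      by (simp add: z_def algebra_simps)
    moreover have "ut p s + \<sigma> * p * (1 - p) * ux p s - \<rho> * (u (jump \<gamma> p) s - u p s) = 0"
      using pde[OF p \<open>s > 0\<close>] by simp
    moreover have "d * exp s > 0" using \<open>d > 0\<close> by simp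
    ultimately show False
      using w_super[OF p \<open>s > 0\<close>] by simp
  qed (use assms(7,8) in auto)
  then show "0 < e * (u x t - w x t) + d * exp t" by (simp add: z_def)
qed

lemma u_le_1: "x \<in> {0..1} \<Longrightarrow> t \<ge> 0 \<Longrightarrow> u x t \<le> 1"
  using comparison[of "-1" "\<lambda>_ _. 1" "\<lambda>_ _. 0" "\<lambda>_ _. 0" x t] by auto

lemma lower_barrier:
  assumes "0 < p" "p \<le> 1" "a = \<sigma> * p + \<rho> * ((1 - \<gamma>) powr p - 1)" "x \<in> {0..1}" "t \<ge> 0"
  shows "1 - exp (a * t) * (1 - x) powr p \<le> u x t"
proof -
  define w where "w x t = 1 - exp (a * t) * (1 - x) powr p" for x t
  define wx where "wx x t = exp (a * t) * p * (1 - x) powr (p - 1)" for x t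
  define wt where "wt x t = - a * exp (a * t) * (1 - x) powr p" for x t
  have "1 * (u x t - w x t) \<ge> 0"
  proof (rule comparison[of 1 w wx wt x t])
    have "continuous_on ({0..1} \<times> {0..}) (\<lambda>z. 1 - exp (a * snd z) * (1 - fst z) powr p)"
      using assms(1) by (intro continuous_intros continuous_on_powr') auto
    then show "continuous_on ({0..1} \<times> {0..}) (\<lambda>(x, t). w x t)"
      by (simp add: w_def case_prod_beta)
  next
    show "1 * (y - w y 0) \<ge> 0" if "y \<in> {0..1}" for y
      using that assms(1,2) powr_mono'[of p 1 "1 - y"] by (auto simp: w_def)
  next
    show "((\<lambda>y. w y s) has_real_derivative wx y s) (at y within {0..1})" if "y \<in> {0<..<1}" for y s
      using that unfolding w_def wx_def by (auto intro!: derivative_eq_intros)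
  next
    show "((\<lambda>s. w y s) has_real_derivative wt y s) (at s)" for y s
      unfolding w_def wt_def by (auto intro!: derivative_eq_intros)
  next
    fix y s :: real assume y: "y \<in> {0..1}"
    define E where "E = exp (a * s)"
    define B where "B = (1 - y) powr p"
    have "(1 - y) * (1 - y) powr (p - 1) = B"
      using powr_mult_base[of "1 - y" "p - 1"] y by (simp add: B_def)
    then have drift: "\<sigma> * y * (1 - y) * wx y s = \<sigma> * p * y * E * B"
      by (simp add: wx_def E_def ac_simps)
    have "(1 - jump \<gamma> y) powr p = (1 - \<gamma>) powr p * B"
      using jump_size y by (simp add: B_def one_minus_jump powr_mult)
    then have jump: "w (jump \<gamma> y) s - w y s = - E * B * ((1 - \<gamma>) powr p - 1)"
      by (simp add: w_def E_def B_def algebra_simps)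
    have "wt y s = - a * E * B" by (simp add: wt_def E_def B_def)
    then have "wt y s + \<sigma> * y * (1 - y) * wx y s - \<rho> * (w (jump \<gamma> y) s - w y s)
        = - E * B * (\<sigma> * p * (1 - y))"
      unfolding drift jump by (simp add: assms(3) algebra_simps)
    also have "\<dots> \<le> 0"
      using y assms(1) speed_nonneg by (simp add: E_def B_def)
    finally show "1 * (wt y s + \<sigma> * y * (1 - y) * wx y s - \<rho> * (w (jump \<gamma> y) s - w y s)) \<le> 0"
      by simp
  qed (use assms(4,5) in auto)
  then show ?thesis by (simp add: w_def)
qed

lemma tendsto_1_if_log_rate_neg:
  assumes "\<sigma> + \<rho> * ln (1 - \<gamma>) < 0" "x \<in> {0..<1}"
  shows "((\<lambda>t. u x t) \<longlongrightarrow> 1) at_top"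
proof -
  have rate: "1 * (\<sigma> + \<rho> * ln (1 - \<gamma>)) < 0" using assms(1) by simp
  obtain p where p: "0 < p" "p < 1" "1 * \<sigma> * p + \<rho> * ((1 - \<gamma>) powr (1 * p) - 1) < 0"
    using small_exponent_with_negative_rate[OF _ rate] jump_size by auto
  define a where "a = \<sigma> * p + \<rho> * ((1 - \<gamma>) powr p - 1)"
  show ?thesis
  proof (rule tendsto_sandwich)
    have "a < 0" using p(3) by (simp add: a_def)
    then show "((\<lambda>t. 1 - exp (a * t) * (1 - x) powr p) \<longlongrightarrow> 1) at_top"
      by real_asymp
    show "\<forall>\<^sub>F t in at_top. 1 - exp (a * t) * (1 - x) powr p \<le> u x t"
      using eventually_ge_at_top[of 0]
      by eventually_elim (use lower_barrier[OF p(1) _ a_def] p(2) assms(2) in auto)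
    show "\<forall>\<^sub>F t in at_top. u x t \<le> 1"
      using eventually_ge_at_top[of 0] by eventually_elim (use u_le_1 assms(2) in auto)
  qed (rule tendsto_const)
qed

text \<open>Up to the term \<open>\<delta> exp t\<close>, which makes the comparison strict, \<open>gap q \<kappa> e \<delta> \<ge> 0\<close> is the
  two-point estimate \<open>e (u y t - u x t) \<le> exp (-\<kappa> t) Phi q x y\<close>, \<open>e = \<plusminus>1\<close>.\<close>

definition gap :: "real \<Rightarrow> real \<Rightarrow> real \<Rightarrow> real \<Rightarrow> real \<times> real \<Rightarrow> real \<Rightarrow> real" where
  "gap q \<kappa> e \<delta> = (\<lambda>(x, y) t. exp (-\<kappa> * t) * Phi q x y - e * (u y t - u x t) + \<delta> * exp t)"

lemma gap_eq: "gap q \<kappa> e \<delta> (x, y) t = exp (-\<kappa> * t) * Phi q x y - e * (u y t - u x t) + \<delta> * exp t"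
  by (simp add: gap_def)

lemma gap_initial:
  assumes "0 < q" "e = 1 \<or> e = -1" "\<delta> > 0" "p \<in> ordered_pairs"
  shows "gap q \<kappa> e \<delta> p 0 > 0"
proof -
  obtain x y where p: "p = (x, y)" "0 \<le> x" "x \<le> y" "y < 1"
    using assms(4) by (auto simp: ordered_pairs_def)
  have "e * (y - x) \<le> Phi q x y" using Phi_ge_diff[OF p(2-4) assms(1)] assms(2) p by auto
  then show ?thesis using initial[of x] initial[of y] p assms(3) by (simp add: gap_eq)
qed

lemma gap_deriv_t:
  assumes "x \<in> {0..1}" "y \<in> {0..1}" "s > 0"
  shows "((\<lambda>s. gap q \<kappa> e \<delta> (x, y) s) has_real_derivative
    - \<kappa> * exp (-\<kappa> * s) * Phi q x y - e * (ut y s - ut x s) + \<delta> * exp s) (at s)"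
  unfolding gap_eq using assms by (auto intro!: derivative_eq_intros deriv_t)

lemma gap_nonpos_imp_oscillation:
  assumes "q > 0" "e = 1 \<or> e = -1" "\<delta> > 0" "(x, y) \<in> ordered_pairs" "t \<ge> 0"
    and "gap q \<kappa> e \<delta> (x, y) t \<le> 0"
  shows "\<delta> \<le> \<bar>u y t - u x t\<bar>" and "exp (-\<kappa> * t) * Phi q x y \<le> \<bar>u y t - u x t\<bar>"
proof -
  have xy: "0 \<le> x" "x \<le> y" "y < 1" using assms(4) by (auto simp: ordered_pairs_def)
  have "\<delta> * 1 \<le> \<delta> * exp t" using assms(3,5) by (intro mult_left_mono) auto
  then have "exp (-\<kappa> * t) * Phi q x y + \<delta> * 1 \<le> e * (u y t - u x t)"
    using assms(6) unfolding gap_eq by linarith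
  moreover have "e * (u y t - u x t) \<le> \<bar>u y t - u x t\<bar>" using assms(2) by auto
  moreover have "exp (-\<kappa> * t) * Phi q x y \<ge> 0" using Phi_ge_diff[OF xy assms(1)] xy by simp
  ultimately show "\<delta> \<le> \<bar>u y t - u x t\<bar>" "exp (-\<kappa> * t) * Phi q x y \<le> \<bar>u y t - u x t\<bar>"
    using assms(3) by linarith+
qed

lemma gap_sublevel_away_from_1:
  assumes "q > 0" "e = 1 \<or> e = -1" "\<delta> > 0" "T \<ge> 0"
  obtains b where "b < 1"
    and "\<And>x y t. (x, y) \<in> ordered_pairs \<Longrightarrow> t \<in> {0..T} \<Longrightarrow> gap q \<kappa> e \<delta> (x, y) t \<le> 0 \<Longrightarrow> y \<le> b"
proof -
  define S where "S = {0..1::real} \<times> {0..T}"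
  have "compact S" unfolding S_def by (intro compact_Times) auto
  then have "compact ((\<lambda>(x, t). u x t) ` S)"
    unfolding S_def by (intro compact_continuous_image continuous_on_strip)
  then obtain M where M: "\<forall>v\<in>(\<lambda>(x, t). u x t) ` S. norm v \<le> M"
    using compact_imp_bounded bounded_iff by metis
  have u_bound: "\<bar>u x t\<bar> \<le> M" if "x \<in> {0..1}" "t \<in> {0..T}" for x t
    using M that unfolding S_def by force
  have "uniformly_continuous_on S (\<lambda>(x, t). u x t)"
    unfolding S_def by (intro compact_uniformly_continuous continuous_on_strip compact_Times) auto
  then obtain \<eta> where "\<eta> > 0" and \<eta>: "\<forall>a\<in>S. \<forall>a'\<in>S. dist a' a < \<eta> \<longrightarrow>
      dist ((\<lambda>(x, t). u x t) a') ((\<lambda>(x, t). u x t) a) < \<delta>"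
    using assms(3) unfolding uniformly_continuous_on_def by metis
  define B where "B = 2 * M * exp (\<bar>\<kappa>\<bar> * T)"
  have "B \<ge> 0" using u_bound[of 0 0] assms(4) by (simp add: B_def)
  then have "q * B + \<eta> powr (-q) > 0" using assms(1) \<open>\<eta> > 0\<close> by (simp add: add_nonneg_pos)
  then have "1 - (q * B + \<eta> powr (-q)) powr (-1 / q) < 1" by simp
  moreover have "y \<le> 1 - (q * B + \<eta> powr (-q)) powr (-1 / q)"
    if xy_pair: "(x, y) \<in> ordered_pairs" and t: "t \<in> {0..T}" and gap: "gap q \<kappa> e \<delta> (x, y) t \<le> 0"
    for x y t
  proof (rule Phi_bounded_imp_away_from_1)
    show xy: "0 \<le> x" "x \<le> y" "y < 1" using xy_pair by (auto simp: ordered_pairs_def)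
    have "t \<ge> 0" using t by simp
    note oscillation = gap_nonpos_imp_oscillation[OF assms(1-3) xy_pair this gap]
    have "\<bar>u x t\<bar> \<le> M" "\<bar>u y t\<bar> \<le> M" using u_bound xy t by auto
    then have "exp (-\<kappa> * t) * Phi q x y \<le> 2 * M" using oscillation(2) by linarith
    then have "Phi q x y \<le> 2 * M * exp (\<kappa> * t)" by (simp add: exp_minus field_simps)
    also have "\<dots> \<le> B"
    proof -
      have "\<kappa> * t \<le> \<bar>\<kappa>\<bar> * T" using t by (intro mult_mono) auto
      then show ?thesis unfolding B_def using t u_bound[of 0 0] by (intro mult_left_mono) auto
    qed
    finally show "Phi q x y \<le> B" .
    show "\<eta> \<le> y - x"
    proof (rule ccontr)
      assume "\<not> \<eta> \<le> y - x"
      then have "dist (y, t) (x, t) < \<eta>" using xy by (simp add: dist_Pair_Pair dist_real_def)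
      moreover have "(x, t) \<in> S" "(y, t) \<in> S" using xy t unfolding S_def by auto
      ultimately have "dist (u y t) (u x t) < \<delta>" using \<eta> by fastforce
      then show False using oscillation(1) by (simp add: dist_real_def)
    qed
  qed (use assms(1) \<open>\<eta> > 0\<close> in auto)
  ultimately show ?thesis using that by blast
qed

lemma compact_gap_sublevel:
  assumes "q > 0" "e = 1 \<or> e = -1" "\<delta> > 0" "T \<ge> 0"
  shows "compact {(p, t). p \<in> ordered_pairs \<and> t \<in> {0..T} \<and> gap q \<kappa> e \<delta> p t \<le> 0}"
proof -
  obtain b where "b < 1" and far: "\<And>x y t. (x, y) \<in> ordered_pairs \<Longrightarrow> t \<in> {0..T} \<Longrightarrow>
      gap q \<kappa> e \<delta> (x, y) t \<le> 0 \<Longrightarrow> y \<le> b"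
    using gap_sublevel_away_from_1[OF assms] by blast
  define K where "K = (({0..b} \<times> {0..b}) \<inter> {p. fst p \<le> snd p}) \<times> {0..T}"
  have "compact K" unfolding K_def
    by (intro compact_Times compact_Int_closed closed_Collect_le continuous_intros) auto
  moreover have "continuous_on K (\<lambda>(p, t). gap q \<kappa> e \<delta> p t)"
  proof -
    have sub: "(\<lambda>z. (snd (fst z), snd z)) ` K \<subseteq> {0..1} \<times> {0..T}"
      "(\<lambda>z. (fst (fst z), snd z)) ` K \<subseteq> {0..1} \<times> {0..T}"
      using \<open>b < 1\<close> unfolding K_def by auto
    have "continuous_on K (\<lambda>z. exp (-\<kappa> * snd z) * Phi q (fst (fst z)) (snd (fst z))
        - e * ((\<lambda>(x, t). u x t) (snd (fst z), snd z) - (\<lambda>(x, t). u x t) (fst (fst z), snd z))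
        + \<delta> * exp (snd z))"
      unfolding Phi_def using \<open>b < 1\<close> assms(1)
      by (intro continuous_intros continuous_on_powr continuous_on_compose2[OF continuous_on_strip _ sub(1)]
          continuous_on_compose2[OF continuous_on_strip _ sub(2)]) (auto simp: K_def)
    then show ?thesis by (simp add: gap_def case_prod_beta)
  qed
  ultimately have "compact {(p, t). (p, t) \<in> K \<and> gap q \<kappa> e \<delta> p t \<le> 0}"
    by (rule compact_sublevel)
  moreover have "{(p, t). (p, t) \<in> K \<and> gap q \<kappa> e \<delta> p t \<le> 0}
      = {(p, t). p \<in> ordered_pairs \<and> t \<in> {0..T} \<and> gap q \<kappa> e \<delta> p t \<le> 0}"
  proof safe
    fix x y t
    assume "(x, y) \<in> ordered_pairs" "t \<in> {0..T}" "gap q \<kappa> e \<delta> (x, y) t \<le> 0"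
    then show "((x, y), t) \<in> K" using far[of x y t] unfolding K_def ordered_pairs_def by auto
  qed (use \<open>b < 1\<close> in \<open>auto simp: K_def ordered_pairs_def\<close>)
  ultimately show ?thesis by simp
qed

lemma gap_no_first_contact:
  assumes q: "0 < q" "q < 1" and \<kappa>: "\<kappa> = \<sigma> * q - \<rho> * ((1 - \<gamma>) powr (-q) - 1)"
    and "e = 1 \<or> e = -1" "\<delta> > 0" "(x, y) \<in> ordered_pairs" "s > 0"
    and contact: "\<forall>p\<in>ordered_pairs. gap q \<kappa> e \<delta> p s \<ge> 0" "gap q \<kappa> e \<delta> (x, y) s = 0"
      "\<forall>r\<in>{0..<s}. gap q \<kappa> e \<delta> (x, y) r > 0"
  shows False
proof -
  have xy: "0 \<le> x" "x \<le> y" "y < 1" using assms(6) by (auto simp: ordered_pairs_def)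
  then have unit: "x \<in> {0..1}" "y \<in> {0..1}" by auto
  have "x < y"
  proof (rule ccontr)
    assume "\<not> x < y"
    then have "x = y" using xy by simp
    then show False using contact(2) \<open>\<delta> > 0\<close> by (simp add: gap_eq Phi_def)
  qed
  define E where "E = exp (-\<kappa> * s)"
  define zt where "zt = - \<kappa> * E * Phi q x y - e * (ut y s - ut x s) + \<delta> * exp s"
  define zx where "zx = E * - ((1 - x) powr (-q - 1)) + e * ux x s"
  define zy where "zy = E * (1 - y) powr (-q - 1) - e * ux y s"
  define j where "j = (jump \<gamma> x, jump \<gamma> y)"
  have contact_ineq: "zt + \<sigma> * x * (1 - x) * zx + \<sigma> * y * (1 - y) * zy
      - \<rho> * (gap q \<kappa> e \<delta> j s - gap q \<kappa> e \<delta> (x, y) s) \<le> 0"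
  proof (rule first_contact_operator_nonpos_pairs[OF assms(6) \<open>x < y\<close> \<open>s > 0\<close> contact])
    show "((\<lambda>s. gap q \<kappa> e \<delta> (x, y) s) has_real_derivative zt) (at s)"
      unfolding zt_def E_def using gap_deriv_t[OF unit \<open>s > 0\<close>] .
    show "((\<lambda>x'. gap q \<kappa> e \<delta> (x', y) s) has_real_derivative zx) (at x within {0..1})"
      unfolding gap_eq zx_def E_def using xy q
      by (auto intro!: derivative_eq_intros Phi_deriv_left deriv_x[OF unit(1) \<open>s > 0\<close>])
    show "((\<lambda>y'. gap q \<kappa> e \<delta> (x, y') s) has_real_derivative zy) (at y within {0..1})"
      unfolding gap_eq zy_def E_def using xy q
      by (auto intro!: derivative_eq_intros Phi_deriv_right deriv_x[OF unit(2) \<open>s > 0\<close>])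
    show "j \<in> ordered_pairs"
      unfolding j_def using jump_size assms(6) by (intro jump_ordered_pairs) auto
  qed (rule rate_nonneg)
  have gap_diff: "gap q \<kappa> e \<delta> j s - gap q \<kappa> e \<delta> (x, y) s
      = E * ((1 - \<gamma>) powr (-q) - 1) * Phi q x y
        - e * ((u (jump \<gamma> y) s - u (jump \<gamma> x) s) - (u y s - u x s))"
    using Phi_jump[of x y \<gamma>] xy jump_size by (simp add: j_def gap_eq E_def algebra_simps)
  have zt_eq: "zt = - (\<sigma> * q - \<rho> * ((1 - \<gamma>) powr (-q) - 1)) * E * Phi q x y
      - e * (ut y s - ut x s) + \<delta> * exp s"
    by (simp add: zt_def \<kappa>)
  have "zt + \<sigma> * x * (1 - x) * zx + \<sigma> * y * (1 - y) * zy
      - \<rho> * (gap q \<kappa> e \<delta> j s - gap q \<kappa> e \<delta> (x, y) s) = E * (\<sigma> * x * (1 - x) * - ((1 - x) powr (-q - 1))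
        + \<sigma> * y * (1 - y) * (1 - y) powr (-q - 1) - \<sigma> * q * Phi q x y)
      + e * (ut x s + \<sigma> * x * (1 - x) * ux x s - \<rho> * (u (jump \<gamma> x) s - u x s))
      - e * (ut y s + \<sigma> * y * (1 - y) * ux y s - \<rho> * (u (jump \<gamma> y) s - u y s))
      + \<delta> * exp s"
    unfolding gap_diff zt_eq zx_def zy_def by (simp add: algebra_simps)
  moreover have "E * (\<sigma> * x * (1 - x) * - ((1 - x) powr (-q - 1))
      + \<sigma> * y * (1 - y) * (1 - y) powr (-q - 1) - \<sigma> * q * Phi q x y) \<ge> 0"
    using Phi_drift[OF xy q(1) _ speed_nonneg] q(2) by (simp add: E_def)
  moreover have "\<delta> * exp s > 0" using \<open>\<delta> > 0\<close> by simp
  ultimately show False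
    using contact_ineq pde[OF unit(1) \<open>s > 0\<close>] pde[OF unit(2) \<open>s > 0\<close>] by simp
qed

lemma two_point_bound:
  assumes "0 < q" "q < 1" "\<kappa> = \<sigma> * q - \<rho> * ((1 - \<gamma>) powr (-q) - 1)"
    and "(x, y) \<in> ordered_pairs" "t \<ge> 0"
  shows "\<bar>u y t - u x t\<bar> \<le> exp (-\<kappa> * t) * Phi q x y"
proof -
  have "e * (u y t - u x t) \<le> exp (-\<kappa> * t) * Phi q x y" if e: "e = 1 \<or> e = -1" for e
  proof -
    have "exp (-\<kappa> * t) * Phi q x y - e * (u y t - u x t) \<ge> 0"
    proof (rule nonneg_if_pos_perturbation)
      fix \<delta> :: real assume "\<delta> > 0"
      have "gap q \<kappa> e \<delta> (x, y) t > 0"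
      proof (rule positive_unless_first_contact[of ordered_pairs "gap q \<kappa> e \<delta>"])
        show "gap q \<kappa> e \<delta> p 0 > 0" if "p \<in> ordered_pairs" for p
          using gap_initial assms(1) e \<open>\<delta> > 0\<close> that by blast
        show "compact {(p, t). p \<in> ordered_pairs \<and> t \<in> {0..T} \<and> gap q \<kappa> e \<delta> p t \<le> 0}"
          if "T \<ge> 0" for T
          using compact_gap_sublevel assms(1) e \<open>\<delta> > 0\<close> that by blast
        show "continuous (at_left s) (gap q \<kappa> e \<delta> p)" if "p \<in> ordered_pairs" "s > 0" for p s
        proof -
          obtain x' y' where p: "p = (x', y')" by (cases p)
          then have "x' \<in> {0..1}" "y' \<in> {0..1}" using that(1) by (auto simp: ordered_pairs_def)
          then show ?thesis unfolding p
            using DERIV_isCont[OF gap_deriv_t[OF _ _ that(2)]] continuous_at_imp_continuous_at_within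
            by blast
        qed
        show False if "p \<in> ordered_pairs" "s > 0" "\<forall>p'\<in>ordered_pairs. gap q \<kappa> e \<delta> p' s \<ge> 0"
          "gap q \<kappa> e \<delta> p s = 0" "\<forall>r\<in>{0..<s}. gap q \<kappa> e \<delta> p r > 0" for p s
          using gap_no_first_contact[OF assms(1-3) e \<open>\<delta> > 0\<close>] that by (cases p) blast
      qed (use assms(4,5) in auto)
      then show "exp (-\<kappa> * t) * Phi q x y - e * (u y t - u x t) + \<delta> * exp t > 0"
        by (simp add: gap_eq)
    qed
    then show ?thesis by simp
  qed
  from this[of 1] this[of "-1"] show ?thesis by auto
qed

lemma convergent_if_log_rate_pos:
  assumes "\<sigma> + \<rho> * ln (1 - \<gamma>) > 0"
  shows "\<exists>L. \<forall>x\<in>{0..<1}. ((\<lambda>t. u x t) \<longlongrightarrow> L) at_top"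
proof -
  have rate: "-1 * (\<sigma> + \<rho> * ln (1 - \<gamma>)) < 0" using assms by simp
  obtain q where q: "0 < q" "q < 1" "-1 * \<sigma> * q + \<rho> * ((1 - \<gamma>) powr (-1 * q) - 1) < 0"
    using small_exponent_with_negative_rate[OF _ rate] jump_size by auto
  define \<kappa> where "\<kappa> = \<sigma> * q - \<rho> * ((1 - \<gamma>) powr (-q) - 1)"
  have "\<kappa> > 0" using q(3) by (simp add: \<kappa>_def)
  note decay = two_point_bound[OF q(1,2) \<kappa>_def]
  have "\<exists>L. (u 0 \<longlongrightarrow> L) at_top"
  proof (rule convergent_if_deriv_exp_bounded)
    show "continuous_on {0..} (u 0)"
      by (rule continuous_on_compose2[OF continuous, of _ "\<lambda>t. (0, t)", simplified])
        (auto intro: continuous_intros)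
    show "(u 0 has_real_derivative ut 0 t) (at t)" if "t > 0" for t
      using deriv_t[of 0 t] that by simp
    show "\<bar>ut 0 t\<bar> \<le> \<rho> * Phi q 0 \<gamma> * exp (-\<kappa> * t)" if "t > 0" for t
    proof -
      have "ut 0 t = \<rho> * (u \<gamma> t - u 0 t)" using pde[of 0 t] that by (simp add: jump_def)
      then have "\<bar>ut 0 t\<bar> = \<rho> * \<bar>u \<gamma> t - u 0 t\<bar>" using rate_nonneg by (simp add: abs_mult)
      also have "\<dots> \<le> \<rho> * (exp (-\<kappa> * t) * Phi q 0 \<gamma>)"
        using decay[of 0 \<gamma> t] jump_size that rate_nonneg
        by (intro mult_left_mono) (auto simp: ordered_pairs_def)
      finally show ?thesis by (simp add: ac_simps)
    qed
  qed (rule \<open>\<kappa> > 0\<close>)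
  then obtain L where L: "(u 0 \<longlongrightarrow> L) at_top" by blast
  have "((\<lambda>t. u x t) \<longlongrightarrow> L) at_top" if "x \<in> {0..<1}" for x
  proof -
    have "((\<lambda>t. u x t - u 0 t) \<longlongrightarrow> 0) at_top"
    proof (rule Lim_null_comparison)
      show "\<forall>\<^sub>F t in at_top. norm (u x t - u 0 t) \<le> exp (-\<kappa> * t) * Phi q 0 x"
        using eventually_ge_at_top[of 0]
        by eventually_elim (use decay[of 0 x] that in \<open>auto simp: ordered_pairs_def\<close>)
      show "((\<lambda>t. exp (-\<kappa> * t) * Phi q 0 x) \<longlongrightarrow> 0) at_top"
        using \<open>\<kappa> > 0\<close> by real_asymp
    qed
    from tendsto_add[OF this L] show ?thesis by simp
  qed
  then show ?thesis by blast
qed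

end

theorem proposition4p11:
  fixes \<sigma> f m \<gamma> \<gamma>s :: real and u :: "real \<Rightarrow> real \<Rightarrow> real"
  assumes "\<sigma> > 0" "f > 0" "m > 0" "\<sigma> > m * f"
    and "\<gamma>s \<in> {0<..<1}" "\<sigma> * \<gamma>s + m * f * ln (1 - \<gamma>s) = 0"
    and "\<gamma> \<in> {0<..<1}" "\<gamma> \<noteq> \<gamma>s"
    and "classical_solution \<sigma> m f \<gamma> u"
  shows "\<exists>ubar. \<forall>x\<in>{0..<1}. ((\<lambda>t. u x t) \<longlongrightarrow> ubar) at_top"
proof -
  define \<rho> where "\<rho> = m * f / \<gamma>"
  obtain ux ut where "continuous_on ({0..1} \<times> {0..}) (\<lambda>(x, t). u x t)" "\<forall>x\<in>{0..1}. u x 0 = x"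
    "\<forall>x\<in>{0..1}. \<forall>t>0. ((\<lambda>y. u y t) has_real_derivative ux x t) (at x within {0..1}) \<and>
       ((\<lambda>s. u x s) has_real_derivative ut x t) (at t) \<and>
       ut x t + \<sigma> * x * (1 - x) * ux x t = \<rho> * (u (jump \<gamma> x) t - u x t)"
    using assms(9) unfolding classical_solution_def \<rho>_def jump_def by blast
  then interpret jump_pde_solution \<sigma> \<rho> \<gamma> u ux ut
    using assms(1-3,7) by unfold_locales (auto simp: \<rho>_def)
  have rate: "\<sigma> + \<rho> * ln (1 - \<gamma>) = (\<sigma> * \<gamma> + m * f * ln (1 - \<gamma>)) / \<gamma>"
    using jump_size by (simp add: \<rho>_def field_simps)
  have "m * f > 0" using assms(2,3) by simp
  note sign = linear_plus_log_sign[OF this _ _ assms(6) jump_size]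
  show ?thesis
  proof (cases "\<gamma> < \<gamma>s")
    case True
    then have "\<sigma> * \<gamma> + m * f * ln (1 - \<gamma>) > 0" using sign(1) assms(5) by auto
    then have "\<sigma> + \<rho> * ln (1 - \<gamma>) > 0" unfolding rate using jump_size by simp
    then show ?thesis by (rule convergent_if_log_rate_pos)
  next
    case False
    then have "\<sigma> * \<gamma> + m * f * ln (1 - \<gamma>) < 0" using sign(2) assms(5,8) by auto
    then have "\<sigma> + \<rho> * ln (1 - \<gamma>) < 0" unfolding rate using jump_size by (simp add: divide_neg_pos)
    then show ?thesis by (intro exI[of _ 1] ballI tendsto_1_if_log_rate_neg)
  qed
qed

end
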